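(* Let $\varphi$ be a quantifier-free formula in the SMT theory of floating-point numbers and $\mathit{cost}$ a floating-point variable occurring in $\varphi$ with $n$ bits, and suppose $\varphi_{\mathrm{noNaN}}:=\varphi\wedge\neg\mathrm{isNaN}(\mathit{cost})$ is satisfiable; consider minimization (resp. maximization) of $\mathit{cost}$. Let $T$ be the attractor trajectory defined below. Then any model $\mathcal{M}$ of $\varphi_{\mathrm{noNaN}}$ which lexicographically maximizes $T$ with respect to $\varphi_{\mathrm{noNaN}}$ is an optimal solution of the problem, i.e. there is no model $\mathcal{M}'$ of $\varphi_{\mathrm{noNaN}}$ with $\mathcal{M}'(\mathit{cost})<\mathcal{M}(\mathit{cost})$ (resp. $\mathcal{M}'(\mathit{cost})>\mathcal{M}(\mathit{cost})$).
   Context: Bits of $\mathit{cost}$ are indexed from most significant $\mathit{cost}[0]$ (sign) to least significant $\mathit{cost}[n-1]$; $n=e+s$ where $e$ is the number of exponent bits and $s$ the number of significand bits including the hidden bit, with IEEE 754-2008 binary semantics: with bias $b=2^{e-1}-1$, exponent field $E$ all ones and significand $m=0$ gives $\pm\infty$, $E$ all ones and $m\neq0$ gives NaN, $E=0$ gives the subnormal $(-1)^\sigma2^{1-b}(0.m)_2$, otherwise the normal $(-1)^\sigma2^{E-b}(1.m)_2$. The order $\le,<$ is the usual total order on non-NaN floating-point values ($+0$ and $-0$ equal). For an assignment $\tau_k$ to the $k$ most significant bits of $\mathit{cost}$, the dynamic attractor $d_{\tau_k}$ is the smallest (resp. largest) non-NaN floating-point value whose $k$ most significant bits agree with $\tau_k$,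 and $A^{\tau_k}[i]:=(\mathit{cost}[i]=d_{\tau_k}[i])$. Inductively, $\tau_0=\emptyset$ and for $k\in[0..n-1]$, $\tau_{k+1}=\tau_k\cup\{\mathit{cost}[k]:=b_k\}$ where $b_k=\overline{d_{\tau_k}[k]}$ if $\varphi_{\mathrm{noNaN}}\wedge\tau_k\wedge A^{\tau_k}[k]$ is unsatisfiable and $b_k=d_{\tau_k}[k]$ otherwise. The attractor trajectory is $T=[A^{\tau_0}[0],\dots,A^{\tau_{n-1}}[n-1]]$. For an assignment $\mu$ to all bits of $\mathit{cost}$, $\mu|_k$ is its restriction to $\mathit{cost}[0..k-1]$; $\mu$ lexicographically maximizes $T$ with respect to $\varphi_{\mathrm{noNaN}}$ iff for every $k\in[0..n-1]$: $\mu[k]=\overline{d_{\tau_k}[k]}$ if $\varphi_{\mathrm{noNaN}}\wedge\mu|_k\wedge T[k]$ is unsatisfiable, and $\mu[k]=d_{\tau_k}[k]$ otherwise. A model lexicographically maximizes $T$ iff its restriction to the bits of $\mathit{cost}$ does. *)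

theory Defs
  imports Complex_Main "HOL-Library.Extended_Real"
begin

text \<open>Bit vectors are lists of booleans, index 0 = most significant bit (the sign).
  Format: e exponent bits, s significand bits including the hidden bit, n = e + s.\<close>

definition bits_to_nat :: "bool list \<Rightarrow> nat" where
  "bits_to_nat bs = foldl (\<lambda>acc b. 2 * acc + (if b then 1 else 0)) 0 bs"

definition fp_exp_field :: "nat \<Rightarrow> bool list \<Rightarrow> nat" where
  "fp_exp_field e bv = bits_to_nat (take e (drop 1 bv))"

definition fp_frac_field :: "nat \<Rightarrow> bool list \<Rightarrow> nat" where
  "fp_frac_field e bv = bits_to_nat (drop (Suc e) bv)"

definition fp_bias :: "nat \<Rightarrow> int" where
  "fp_bias e = 2 ^ (e - 1) - 1"

definition fp_is_nan :: "nat \<Rightarrow> nat \<Rightarrow> bool list \<Rightarrow> bool" where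
  "fp_is_nan e s bv \<longleftrightarrow> fp_exp_field e bv = 2 ^ e - 1 \<and> fp_frac_field e bv \<noteq> 0"

text \<open>Value of a non-NaN floating-point bit vector (IEEE 754-2008 binary semantics);
  +0 and -0 both map to 0, so they are equal in the order.\<close>
definition fp_value :: "nat \<Rightarrow> nat \<Rightarrow> bool list \<Rightarrow> ereal" where
  "fp_value e s bv =
    (let sg = bv ! 0; E = fp_exp_field e bv; m = fp_frac_field e bv;
         b = fp_bias e; sgn_r = (if sg then -1 else 1 :: real) in
     if E = 2 ^ e - 1 then (if sg then -\<infinity> else \<infinity>)
     else if E = 0 then ereal (sgn_r * 2 powr (real_of_int (1 - b)) * (real m / 2 ^ (s - 1)))
     else ereal (sgn_r * 2 powr (real_of_int (int E - b)) * (1 + real m / 2 ^ (s - 1))))"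

definition fp_better :: "bool \<Rightarrow> ereal \<Rightarrow> ereal \<Rightarrow> bool" where
  "fp_better mx x y \<longleftrightarrow> (if mx then x > y else x < y)"

definition fp_candidates :: "nat \<Rightarrow> nat \<Rightarrow> bool list \<Rightarrow> bool list set" where
  "fp_candidates e s p =
     {bv. length bv = e + s \<and> take (length p) bv = p \<and> \<not> fp_is_nan e s bv}"

definition attractor :: "nat \<Rightarrow> nat \<Rightarrow> bool \<Rightarrow> bool list \<Rightarrow> bool list" where
  "attractor e s mx p =
     (SOME bv. bv \<in> fp_candidates e s p \<and>
        (\<forall>bv' \<in> fp_candidates e s p. \<not> fp_better mx (fp_value e s bv') (fp_value e s bv)))"

definition sat_prefix_bit ::
  "nat \<Rightarrow> nat \<Rightarrow> ('m \<Rightarrow> bool) \<Rightarrow> ('m \<Rightarrow> bool list) \<Rightarrow> bool list \<Rightarrow> bool \<Rightarrow> bool" where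
  "sat_prefix_bit e s phi cost p b \<longleftrightarrow>
     (\<exists>M. phi M \<and> \<not> fp_is_nan e s (cost M) \<and> take (length p) (cost M) = p
          \<and> cost M ! length p = b)"

fun tau :: "nat \<Rightarrow> nat \<Rightarrow> bool \<Rightarrow> ('m \<Rightarrow> bool) \<Rightarrow> ('m \<Rightarrow> bool list) \<Rightarrow> nat \<Rightarrow> bool list" where
  "tau e s mx phi cost 0 = []"
| "tau e s mx phi cost (Suc k) =
     (let t = tau e s mx phi cost k; d = attractor e s mx t in
      t @ [if \<not> sat_prefix_bit e s phi cost t (d ! k) then \<not> (d ! k) else d ! k])"

text \<open>mu lexicographically maximizes the attractor trajectory T w.r.t. phi_noNaN.\<close>
definition lex_max_T ::
  "nat \<Rightarrow> nat \<Rightarrow> bool \<Rightarrow> ('m \<Rightarrow> bool) \<Rightarrow> ('m \<Rightarrow> bool list) \<Rightarrow> bool list \<Rightarrow> bool" where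
  "lex_max_T e s mx phi cost mu \<longleftrightarrow> length mu = e + s \<and>
     (\<forall>k < e + s.
        (let d = attractor e s mx (tau e s mx phi cost k) in
         mu ! k = (if \<not> sat_prefix_bit e s phi cost (take k mu) (d ! k) then \<not> (d ! k) else d ! k)))"

end

theory Submission imports Defs begin

(* For a fixed sign, fp_value is strictly monotone (positive sign) or antitone (negative sign)
   in the bit vector read as a binary number, so the non-NaN vectors extending a prefix of
   positive length form an interval of values.  Hence, if d is an optimal vector extending tau_k,
   every vector extending tau_k that takes the bit d[k] is at least as good as every one that takes
   the opposite bit: a better y with the opposite bit would lie between d and a vector sharing
   k + 1 bits with d, and therefore share them as well.  For k = 0 the optimum is -\<infinity>
   (resp. +\<infinity>), so already its sign bit separates.  By induction on k, for every model M'
   some model consistent with tau_k is at least as good as M'; at k = n this model is M, because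
   the lexicographic condition forces cost M = tau_n. *)

lemma bits_to_nat_Nil [simp]: "bits_to_nat [] = 0"
  by (simp add: bits_to_nat_def)

lemma bits_to_nat_snoc [simp]:
  "bits_to_nat (xs @ [b]) = 2 * bits_to_nat xs + (if b then 1 else 0)"
  by (simp add: bits_to_nat_def)

lemma bits_to_nat_append:
  "bits_to_nat (xs @ ys) = bits_to_nat xs * 2 ^ length ys + bits_to_nat ys"
  by (induction ys rule: rev_induct) (simp_all flip: append_assoc add: algebra_simps)

lemma bits_to_nat_less: "bits_to_nat xs < 2 ^ length xs"
  by (induction xs rule: rev_induct) auto

lemma bits_to_nat_inject:
  assumes "length xs = length ys" "bits_to_nat xs = bits_to_nat ys"
  shows "xs = ys"
  using assms
proof (induction xs arbitrary: ys rule: rev_induct)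
  case Nil
  then show ?case by simp
next
  case (snoc x xs)
  then obtain ys' y where ys: "ys = ys' @ [y]"
    by (metis length_0_conv rev_exhaust snoc_eq_iff_butlast)
  have "2 * bits_to_nat xs + (if x then 1 else 0) = 2 * bits_to_nat ys' + (if y then 1 else 0)"
    using snoc.prems ys by simp
  then have "x = y" and "bits_to_nat xs = bits_to_nat ys'"
    by (cases x; cases y; presburger)+
  then show ?case
    using snoc ys by simp
qed

lemma bits_to_nat_replicate_True: "bits_to_nat (replicate k True) = 2 ^ k - 1"
proof (induction k)
  case (Suc k)
  have "bits_to_nat (replicate (Suc k) True) = 2 * (2 ^ k - 1) + 1"
    using Suc by (simp flip: replicate_append_same)
  also have "\<dots> = 2 ^ Suc k - 1"
    using one_le_power[of "2::nat" k] by (simp only: power_Suc) linarith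
  finally show ?case .
qed simp

lemma bits_to_nat_replicate_False: "bits_to_nat (replicate k False) = 0"
  by (induction k) (simp_all flip: replicate_append_same)

lemma bits_to_nat_take:
  assumes "j \<le> length xs"
  shows "bits_to_nat (take j xs) = bits_to_nat xs div 2 ^ (length xs - j)"
proof -
  have "bits_to_nat xs = bits_to_nat (take j xs) * 2 ^ (length xs - j) + bits_to_nat (drop j xs)"
    by (metis append_take_drop_id bits_to_nat_append length_drop)
  moreover have "bits_to_nat (drop j xs) < 2 ^ (length xs - j)"
    using bits_to_nat_less[of "drop j xs"] by simp
  ultimately show ?thesis by simp
qed

lemma take_eq_if_bits_to_nat_between:
  assumes "length a = length y" "length c = length y" "j \<le> length y"
    and "take j a = take j c"
    and "bits_to_nat a \<le> bits_to_nat y" "bits_to_nat y \<le> bits_to_nat c"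
  shows "take j y = take j a"
proof -
  have "bits_to_nat (take j a) \<le> bits_to_nat (take j y)"
    and "bits_to_nat (take j y) \<le> bits_to_nat (take j c)"
    using assms(1-3,5,6) by (simp_all add: bits_to_nat_take div_le_mono)
  then have "bits_to_nat (take j y) = bits_to_nat (take j a)"
    using assms(4) by simp
  then show ?thesis
    using assms(1-3) by (intro bits_to_nat_inject) auto
qed

lemma bits_to_nat_fp_fields:
  assumes "length bv = e + s" "s \<ge> 1"
  shows "bits_to_nat bv = (if bv ! 0 then 2 ^ (e + s - 1) else 0)
            + fp_exp_field e bv * 2 ^ (s - 1) + fp_frac_field e bv"
    and "fp_frac_field e bv < 2 ^ (s - 1)"
proof -
  obtain x xs where bv: "bv = x # xs"
    using assms by (cases bv) auto
  have len: "length xs = e + s - 1" "length (drop e xs) = s - 1"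
    using assms bv by simp_all
  have "bits_to_nat bv = bits_to_nat ([x] @ take e xs @ drop e xs)"
    by (simp add: bv)
  also have "\<dots> = (if x then 2 ^ (e + s - 1) else 0)
                   + bits_to_nat (take e xs) * 2 ^ (s - 1) + bits_to_nat (drop e xs)"
    unfolding bits_to_nat_append using bits_to_nat_snoc[of "[]" x] len by simp
  finally show "bits_to_nat bv = (if bv ! 0 then 2 ^ (e + s - 1) else 0)
                  + fp_exp_field e bv * 2 ^ (s - 1) + fp_frac_field e bv"
    by (simp add: bv fp_exp_field_def fp_frac_field_def)
  show "fp_frac_field e bv < 2 ^ (s - 1)"
    using bits_to_nat_less[of "drop e xs"] len by (simp add: bv fp_frac_field_def)
qed

lemma less_lex_if_less_mixed_radix:
  fixes K :: nat
  assumes "m1 < K" "m2 < K" "E1 * K + m1 < E2 * K + m2"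
  shows "E1 < E2 \<or> (E1 = E2 \<and> m1 < m2)"
proof (rule ccontr)
  assume "\<not> ?thesis"
  then consider "E2 < E1" | "E1 = E2" "m2 \<le> m1"
    by fastforce
  then show False
  proof cases
    case 1
    then have "(E2 + 1) * K \<le> E1 * K"
      by (intro mult_le_mono1) simp
    then show False
      using assms by (simp add: algebra_simps)
  next
    case 2
    then show False
      using assms by simp
  qed
qed

definition fp_magnitude :: "nat \<Rightarrow> nat \<Rightarrow> nat \<Rightarrow> nat \<Rightarrow> ereal" where
  "fp_magnitude e s E m =
     (if E = 2 ^ e - 1 then \<infinity>
      else if E = 0 then ereal (2 powr real_of_int (1 - fp_bias e) * (real m / 2 ^ (s - 1)))
      else ereal (2 powr real_of_int (int E - fp_bias e) * (1 + real m / 2 ^ (s - 1))))"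

lemma fp_value_eq_magnitude:
  "fp_value e s bv =
     (if bv ! 0 then - fp_magnitude e s (fp_exp_field e bv) (fp_frac_field e bv)
      else fp_magnitude e s (fp_exp_field e bv) (fp_frac_field e bv))"
  by (auto simp: fp_value_def fp_magnitude_def Let_def)

lemma fp_magnitude_nonneg: "fp_magnitude e s E m \<ge> 0"
  by (auto simp: fp_magnitude_def)

lemma fp_magnitude_less_next_binade:
  assumes "E \<noteq> 2 ^ e - 1" "m < 2 ^ (s - 1)"
  shows "fp_magnitude e s E m < ereal (2 powr real_of_int (int E + 1 - fp_bias e))"
proof -
  have frac: "real m / 2 ^ (s - 1) < 1"
    using assms(2) by (simp add: divide_less_eq flip: of_nat_less_iff)
  show ?thesis
  proof (cases "E = 0")
    case True
    then show ?thesis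
      using assms(1) mult_strict_left_mono[OF frac, of "2 powr real_of_int (1 - fp_bias e)"]
      by (simp add: fp_magnitude_def del: times_divide_eq_right)
  next
    case False
    have "2 powr real_of_int (int E - fp_bias e) * (1 + real m / 2 ^ (s - 1))
            < 2 powr real_of_int (int E - fp_bias e) * 2"
      using frac by (intro mult_strict_left_mono) simp_all
    also have "\<dots> = 2 powr (real_of_int (int E - fp_bias e) + 1)"
      by (simp add: powr_add)
    also have "\<dots> = 2 powr real_of_int (int E + 1 - fp_bias e)"
      by (simp add: algebra_simps)
    finally show ?thesis
      using False assms(1) by (simp add: fp_magnitude_def)
  qed
qed

lemma fp_magnitude_ge_binade:
  assumes "E \<noteq> 2 ^ e - 1" "E \<noteq> 0"
  shows "ereal (2 powr real_of_int (int E - fp_bias e)) \<le> fp_magnitude e s E m"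
  using assms by (simp add: fp_magnitude_def)

lemma fp_magnitude_strict_mono:
  assumes "E1 < E2 \<or> (E1 = E2 \<and> m1 < m2)" "E2 \<le> 2 ^ e - 1" "m1 < 2 ^ (s - 1)"
    and "E2 = 2 ^ e - 1 \<Longrightarrow> m2 = 0"
  shows "fp_magnitude e s E1 m1 < fp_magnitude e s E2 m2"
  using assms(1)
proof
  assume "E1 < E2"
  then have finite1: "E1 \<noteq> 2 ^ e - 1"
    using assms(2) by simp
  show ?thesis
  proof (cases "E2 = 2 ^ e - 1")
    case True
    then show ?thesis
      using finite1 by (simp add: fp_magnitude_def)
  next
    case False
    have "fp_magnitude e s E1 m1 < ereal (2 powr real_of_int (int E1 + 1 - fp_bias e))"
      using fp_magnitude_less_next_binade finite1 assms(3) by blast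
    also have "\<dots> \<le> ereal (2 powr real_of_int (int E2 - fp_bias e))"
      using \<open>E1 < E2\<close> by simp
    also have "\<dots> \<le> fp_magnitude e s E2 m2"
      using fp_magnitude_ge_binade False \<open>E1 < E2\<close> by simp
    finally show ?thesis .
  qed
next
  assume same: "E1 = E2 \<and> m1 < m2"
  then have "E2 \<noteq> 2 ^ e - 1"
    using assms(4) by auto
  moreover have "real m1 / 2 ^ (s - 1) < real m2 / 2 ^ (s - 1)"
    using same by (simp add: divide_strict_right_mono)
  ultimately show ?thesis
    using same by (simp add: fp_magnitude_def mult_strict_left_mono del: times_divide_eq_right)
qed

lemma fp_value_strict_mono_bits:
  assumes "length a = e + s" "length b = e + s" "s \<ge> 1"
    and "\<not> fp_is_nan e s a" "\<not> fp_is_nan e s b" "a ! 0 = b ! 0"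
    and "bits_to_nat a < bits_to_nat b"
  shows "if a ! 0 then fp_value e s b < fp_value e s a else fp_value e s a < fp_value e s b"
proof -
  note fa = bits_to_nat_fp_fields[OF assms(1,3)] and fb = bits_to_nat_fp_fields[OF assms(2,3)]
  have "fp_exp_field e a * 2 ^ (s - 1) + fp_frac_field e a
          < fp_exp_field e b * 2 ^ (s - 1) + fp_frac_field e b"
    using fa(1) fb(1) assms(6,7) by simp
  then have "fp_exp_field e a < fp_exp_field e b
             \<or> (fp_exp_field e a = fp_exp_field e b \<and> fp_frac_field e a < fp_frac_field e b)"
    using less_lex_if_less_mixed_radix fa(2) fb(2) by blast
  moreover have "fp_exp_field e b \<le> 2 ^ e - 1"
    using bits_to_nat_less[of "take e (drop 1 b)"] assms(2,3) by (simp add: fp_exp_field_def)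
  ultimately have "fp_magnitude e s (fp_exp_field e a) (fp_frac_field e a)
                     < fp_magnitude e s (fp_exp_field e b) (fp_frac_field e b)"
    using fp_magnitude_strict_mono fa(2) assms(5) by (simp add: fp_is_nan_def)
  then show ?thesis
    using assms(6) by (simp add: fp_value_eq_magnitude)
qed

lemma fp_value_le_imp_bits_to_nat_le:
  assumes "length a = e + s" "length b = e + s" "s \<ge> 1"
    and "\<not> fp_is_nan e s a" "\<not> fp_is_nan e s b" "a ! 0 = b ! 0"
    and "fp_value e s a \<le> fp_value e s b"
  shows "if a ! 0 then bits_to_nat b \<le> bits_to_nat a else bits_to_nat a \<le> bits_to_nat b"
  using fp_value_strict_mono_bits[OF assms(2,1,3,5,4) assms(6)[symmetric]]
    fp_value_strict_mono_bits[OF assms(1,2,3,4,5,6)] assms(6,7)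
  by (auto simp flip: not_less)

lemma fp_value_nonneg: "\<not> bv ! 0 \<Longrightarrow> fp_value e s bv \<ge> 0"
  and fp_value_nonpos: "bv ! 0 \<Longrightarrow> fp_value e s bv \<le> 0"
  using fp_magnitude_nonneg by (auto simp: fp_value_eq_magnitude)

lemma take_eq_if_fp_value_between:
  assumes "length a = e + s" "length y = e + s" "length c = e + s" "s \<ge> 1"
    and "\<not> fp_is_nan e s a" "\<not> fp_is_nan e s y" "\<not> fp_is_nan e s c"
    and "0 < j" "j \<le> e + s" "take j a = take j c" "y ! 0 = a ! 0"
    and "fp_value e s a \<le> fp_value e s y" "fp_value e s y \<le> fp_value e s c"
  shows "take j y = take j a"
proof -
  have "c ! 0 = a ! 0"
    using assms(8,10) by (metis nth_take)
  then have "bits_to_nat a \<le> bits_to_nat y \<and> bits_to_nat y \<le> bits_to_nat c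
             \<or> bits_to_nat c \<le> bits_to_nat y \<and> bits_to_nat y \<le> bits_to_nat a"
    using fp_value_le_imp_bits_to_nat_le[OF assms(1,2,4,5,6) _ assms(12)]
      fp_value_le_imp_bits_to_nat_le[OF assms(2,3,4,6,7) _ assms(13)] assms(11)
    by (auto split: if_splits)
  then show ?thesis
    using take_eq_if_bits_to_nat_between[of a y c j] take_eq_if_bits_to_nat_between[of c y a j]
      assms(1-3,9,10)
    by auto
qed

definition fp_infinity :: "nat \<Rightarrow> nat \<Rightarrow> bool \<Rightarrow> bool list" where
  "fp_infinity e s sg = sg # replicate e True @ replicate (s - 1) False"

lemma fp_infinity_in_candidates: "s \<ge> 1 \<Longrightarrow> fp_infinity e s sg \<in> fp_candidates e s []"
  by (simp add: fp_infinity_def fp_candidates_def fp_is_nan_def fp_frac_field_def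
      bits_to_nat_replicate_False)

lemma fp_value_fp_infinity: "fp_value e s (fp_infinity e s sg) = (if sg then - \<infinity> else \<infinity>)"
  by (simp add: fp_infinity_def fp_value_eq_magnitude fp_magnitude_def fp_exp_field_def
      bits_to_nat_replicate_True)

lemma not_fp_better_trans:
  "\<not> fp_better mx x y \<Longrightarrow> \<not> fp_better mx y z \<Longrightarrow> \<not> fp_better mx x z"
  by (auto simp: fp_better_def split: if_splits)

definition fp_optimal :: "nat \<Rightarrow> nat \<Rightarrow> bool \<Rightarrow> bool list set \<Rightarrow> bool list \<Rightarrow> bool" where
  "fp_optimal e s mx C d \<longleftrightarrow> d \<in> C \<and> (\<forall>c \<in> C. \<not> fp_better mx (fp_value e s c) (fp_value e s d))"

lemma finite_fp_candidates: "finite (fp_candidates e s p)"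
  by (rule finite_subset[OF _ finite_lists_length_eq[of UNIV "e + s"]])
    (auto simp: fp_candidates_def)

lemma attractor_optimal:
  assumes "fp_candidates e s p \<noteq> {}"
  shows "fp_optimal e s mx (fp_candidates e s p) (attractor e s mx p)"
proof -
  let ?C = "fp_candidates e s p"
  let ?V = "fp_value e s ` ?C"
  have V: "finite ?V" "?V \<noteq> {}"
    using finite_fp_candidates assms by auto
  obtain d where "d \<in> ?C" "fp_value e s d = (if mx then Max ?V else Min ?V)"
    using Max_in[OF V] Min_in[OF V] by (cases mx) auto
  then have "\<exists>d. fp_optimal e s mx ?C d"
    using V by (auto simp: fp_optimal_def fp_better_def not_less)
  then show ?thesis
    unfolding attractor_def fp_optimal_def[symmetric] by (rule someI_ex)
qed

lemma fp_optimal_sign: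
  assumes "s \<ge> 1" "fp_optimal e s mx (fp_candidates e s []) d"
  shows "d ! 0 \<longleftrightarrow> \<not> mx"
proof (rule ccontr)
  assume "\<not> (d ! 0 \<longleftrightarrow> \<not> mx)"
  then have "fp_better mx (fp_value e s (fp_infinity e s (\<not> mx))) (fp_value e s d)"
    using fp_value_nonneg[of d e s] fp_value_nonpos[of d e s]
    by (cases mx) (auto simp: fp_value_fp_infinity fp_better_def)
  then show False
    using assms fp_infinity_in_candidates by (auto simp: fp_optimal_def)
qed

lemma fp_optimal_bit_not_worse:
  assumes "s \<ge> 1" "length p < e + s"
    and opt: "fp_optimal e s mx (fp_candidates e s p) d"
    and x: "x \<in> fp_candidates e s (p @ [d ! length p])"
    and y: "y \<in> fp_candidates e s p" "y ! length p \<noteq> d ! length p"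
  shows "\<not> fp_better mx (fp_value e s y) (fp_value e s x)"
proof
  assume better: "fp_better mx (fp_value e s y) (fp_value e s x)"
  let ?k = "length p"
  have d: "length d = e + s" "\<not> fp_is_nan e s d" "take ?k d = p"
    and y': "length y = e + s" "\<not> fp_is_nan e s y" "take ?k y = p"
    and x': "length x = e + s" "\<not> fp_is_nan e s x"
    using opt y x by (auto simp: fp_optimal_def fp_candidates_def)
  have x_d: "take (Suc ?k) x = take (Suc ?k) d"
    using x d assms(2) by (auto simp: fp_candidates_def take_Suc_conv_app_nth)
  have "\<not> fp_better mx (fp_value e s y) (fp_value e s d)"
    using opt y by (simp add: fp_optimal_def)
  with better
  have between: "if mx then fp_value e s x < fp_value e s y \<and> fp_value e s y \<le> fp_value e s d
                 else fp_value e s d \<le> fp_value e s y \<and> fp_value e s y < fp_value e s x"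
    by (auto simp: fp_better_def not_less)
  show False
  proof (cases "p = []")
    case True
    have "d ! 0 \<longleftrightarrow> \<not> mx"
      using fp_optimal_sign[OF assms(1)] opt True by simp
    moreover have "x ! 0 = d ! 0"
      using x_d True by (metis lessI list.size(3) nth_take)
    moreover have "y ! 0 \<noteq> d ! 0"
      using y(2) True by simp
    ultimately show False
      using between fp_value_nonneg[of x e s] fp_value_nonpos[of x e s] fp_value_nonneg[of y e s]
        fp_value_nonpos[of y e s]
      by (cases mx) (auto simp flip: not_le)
  next
    case False
    then have sign_y: "y ! 0 = d ! 0"
      using d(3) y'(3) by (metis length_greater_0_conv nth_take)
    have sign_x: "x ! 0 = d ! 0"
      using x_d by (metis zero_less_Suc nth_take)
    have "take (Suc ?k) y = take (Suc ?k) d"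
    proof (cases mx)
      case True
      then show ?thesis
        using take_eq_if_fp_value_between[OF x'(1) y'(1) d(1) assms(1) x'(2) y'(2) d(2)]
          between sign_x sign_y x_d assms(2) by (simp add: less_imp_le)
    next
      case False
      then show ?thesis
        using take_eq_if_fp_value_between[OF d(1) y'(1) x'(1) assms(1) d(2) y'(2) x'(2)]
          between sign_x sign_y x_d assms(2) by (simp add: less_imp_le)
    qed
    then show False
      using y(2) by (metis lessI nth_take)
  qed
qed

lemma length_tau: "length (tau e s mx phi cost k) = k"
  by (induction k) (simp_all add: Let_def)

lemma exists_tau_model_not_worse:
  assumes "s \<ge> 1" "\<forall>N. phi N \<longrightarrow> length (cost N) = e + s"
    and "phi M'" "\<not> fp_is_nan e s (cost M')" "k \<le> e + s"
  shows "\<exists>N. phi N \<and> \<not> fp_is_nan e s (cost N) \<and> take k (cost N) = tau e s mx phi cost k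
             \<and> \<not> fp_better mx (fp_value e s (cost M')) (fp_value e s (cost N))"
  using assms(5)
proof (induction k)
  case 0
  then show ?case
    using assms(3,4) by (auto simp: fp_better_def)
next
  case (Suc k)
  define p where "p = tau e s mx phi cost k"
  define d where "d = attractor e s mx p"
  have k: "k < e + s" "length p = k"
    using Suc.prems by (simp_all add: p_def length_tau)
  obtain N where N: "phi N" "\<not> fp_is_nan e s (cost N)" "take k (cost N) = p"
      "\<not> fp_better mx (fp_value e s (cost M')) (fp_value e s (cost N))"
    using Suc by (auto simp: p_def)
  have N_cand: "cost N \<in> fp_candidates e s p"
    using N k assms(2) by (simp add: fp_candidates_def)
  have opt: "fp_optimal e s mx (fp_candidates e s p) d"
    unfolding d_def using attractor_optimal N_cand by blast
  have tau_Suc: "tau e s mx phi cost (Suc k)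
      = p @ [if sat_prefix_bit e s phi cost p (d ! k) then d ! k else \<not> d ! k]"
    by (simp add: p_def d_def Let_def)
  have take_Suc: "take (Suc k) (cost F) = p @ [cost F ! k]"
    if "phi F" "take k (cost F) = p" for F
    using that k assms(2) by (simp add: take_Suc_conv_app_nth)
  show ?case
  proof (cases "sat_prefix_bit e s phi cost p (d ! k)")
    case sat: True
    show ?thesis
    proof (cases "cost N ! k = d ! k")
      case True
      then show ?thesis
        using sat N tau_Suc take_Suc by auto
    next
      case False
      obtain F where F: "phi F" "\<not> fp_is_nan e s (cost F)" "take k (cost F) = p"
          "cost F ! k = d ! k"
        using sat k by (auto simp: sat_prefix_bit_def)
      have "\<not> fp_better mx (fp_value e s (cost N)) (fp_value e s (cost F))"
        using fp_optimal_bit_not_worse[OF assms(1) _ opt _ N_cand] False F k assms(2)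
        by (simp add: fp_candidates_def take_Suc)
      then have "\<not> fp_better mx (fp_value e s (cost M')) (fp_value e s (cost F))"
        using N(4) not_fp_better_trans by blast
      moreover have "take (Suc k) (cost F) = tau e s mx phi cost (Suc k)"
        using sat F tau_Suc take_Suc by simp
      ultimately show ?thesis
        using F(1,2) by blast
    qed
  next
    case False
    then have "cost N ! k \<noteq> d ! k"
      using N k by (auto simp: sat_prefix_bit_def)
    then show ?thesis
      using False N tau_Suc take_Suc by auto
  qed
qed

lemma lex_max_T_eq_tau:
  assumes "lex_max_T e s mx phi cost mu"
  shows "mu = tau e s mx phi cost (e + s)"
proof -
  have len: "length mu = e + s"
    using assms by (simp add: lex_max_T_def)
  have "take k mu = tau e s mx phi cost k" if "k \<le> e + s" for k
    using that
  proof (induction k)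
    case (Suc k)
    then have "take (Suc k) mu = take k mu @ [mu ! k]"
      using len by (simp add: take_Suc_conv_app_nth)
    then show ?case
      using Suc assms by (simp add: lex_max_T_def Let_def)
  qed simp
  then show ?thesis
    using len by (metis order.refl take_all)
qed

theorem theorem2:
  fixes e s :: nat and mx :: bool
    and phi :: "'m \<Rightarrow> bool" and cost :: "'m \<Rightarrow> bool list" and M :: 'm
  assumes "e \<ge> 2" and "s \<ge> 2"
    and "\<forall>N. phi N \<longrightarrow> length (cost N) = e + s"
    and "\<exists>N. phi N \<and> \<not> fp_is_nan e s (cost N)"
    and "phi M" and "\<not> fp_is_nan e s (cost M)"
    and "lex_max_T e s mx phi cost (cost M)"
  shows "\<not> (\<exists>M'. phi M' \<and> \<not> fp_is_nan e s (cost M') \<and>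
              fp_better mx (fp_value e s (cost M')) (fp_value e s (cost M)))"
proof
  assume "\<exists>M'. phi M' \<and> \<not> fp_is_nan e s (cost M') \<and>
              fp_better mx (fp_value e s (cost M')) (fp_value e s (cost M))"
  then obtain M' where M': "phi M'" "\<not> fp_is_nan e s (cost M')"
      "fp_better mx (fp_value e s (cost M')) (fp_value e s (cost M))"
    by blast
  obtain N where N: "phi N" "take (e + s) (cost N) = tau e s mx phi cost (e + s)"
      "\<not> fp_better mx (fp_value e s (cost M')) (fp_value e s (cost N))"
    using exists_tau_model_not_worse[OF _ assms(3) M'(1,2) order.refl] assms(2) by auto
  have "cost N = cost M"
    using N(1,2) assms(3) lex_max_T_eq_tau[OF assms(7)] by simp
  with N(3) M'(3) show False
    by simp
qed

end
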